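(* Let $N\ge 2$, let $\alpha\in[0,\infty)$ and let $m=\lfloor N^{\alpha}\rfloor$. Consider the quantum walk on the graph $K_N\wedge_{v^*}S_m$ with time evolution operator $U$, initial state $\psi_0$ and success probability $p_t(v^* )$ as described in the context. Then for sufficiently large $N$ and any $\alpha\in[0,\infty)$ there exists a time $t_{\mathrm{opt}}=t_{\mathrm{opt}}(N)\in\mathbb{N}$ such that $$p_{t_{\mathrm{opt}}}(v^* )=\frac12+o(1)\qquad (N\to\infty).$$
   Context: $K_N$ is the complete graph on $N$ vertices and $S_m$ is the star graph (a tree with one center vertex and $m$ leaves). The graph $K_N\wedge_{v^*}S_m$ is obtained from the disjoint union of $K_N$ and $S_m$ by identifying one fixed vertex of $K_N$ with the center of $S_m$; the identified vertex is denoted $v^*$ (so $\deg(v^* )=N-1+m$). Let $V_S$ denote the set of the $m$ leaves of the star. Let $A$ be the set of symmetric arcs (each edge gives two opposite arcs); for an arc $a$, $o(a)$ and $t(a)$ are its origin and terminus, $\bar a$ is its inverse arc, and $\deg(v)=|\{a\in A: t(a)=v\}|$. The time evolution operator $U$ on $\mathbb{C}^A$ is $U=S(2d^*d-I)$, where $(S\psi)(a)=\psi(\bar a)$ and $d:\mathbb{C}^A\to\mathbb{C}^V$ is given by $(d\psi)(v)=\deg(v)^{-1/2}\sum_{a:t(a)=v}\psi(a)$ for $v\notin V_S$ and $(d\psi)(v)=0$ for $v\in V_S$. Explicitly, for $\psi\in\mathbb{C}^A$ and $a\in A$: $(U\psi)(a)=-\psi(\bar a)+\frac{2}{\deg(t(a))}\sum_{b\in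 A:\,o(b)=t(a)}\psi(b)$ if $t(a)\notin V_S$, and $(U\psi)(a)=-\psi(\bar a)$ if $t(a)\in V_S$ (phase reversal at the leaves). The initial state is $\psi_0(a)=1/\sqrt{N(N-1)}$ for $a\in A(K_N)$ and $\psi_0(a)=0$ otherwise, and $\psi_t=U^t\psi_0$. The probability of finding vertex $v$ at time $t$ is $p_t(v)=\sum_{a\in A:\,t(a)=v}|\psi_t(a)|^2$. *)

theory Defs
  imports "HOL-Analysis.Analysis"
begin

text \<open>The graph K_N wedge S_m on vertex set {0..<N+m}: vertices 0..N-1 form K_N,
  vertex 0 is v*, vertices N..N+m-1 are the m leaves of the star (centre v* = 0).
  An arc is a pair (o(a), t(a)); the inverse arc of (u,v) is (v,u).\<close>

definition adj :: "nat \<Rightarrow> nat \<Rightarrow> nat \<Rightarrow> nat \<Rightarrow> bool" where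
  "adj N m u v \<longleftrightarrow> u \<noteq> v \<and>
     ((u < N \<and> v < N) \<or> (u = 0 \<and> N \<le> v \<and> v < N + m) \<or> (v = 0 \<and> N \<le> u \<and> u < N + m))"

definition arcs :: "nat \<Rightarrow> nat \<Rightarrow> (nat \<times> nat) set" where
  "arcs N m = {(u, v). adj N m u v}"

definition leaves :: "nat \<Rightarrow> nat \<Rightarrow> nat set" where
  "leaves N m = {N..<N + m}"

definition vstar :: nat where "vstar = 0"

definition deg :: "nat \<Rightarrow> nat \<Rightarrow> nat \<Rightarrow> nat" where
  "deg N m v = card {a \<in> arcs N m. snd a = v}"

text \<open>Time evolution operator U on C^A (functions outside A are set to 0).\<close>
definition Uop :: "nat \<Rightarrow> nat \<Rightarrow> (nat \<times> nat \<Rightarrow> complex) \<Rightarrow> (nat \<times> nat \<Rightarrow> complex)" where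
  "Uop N m \<psi> a =
     (if a \<in> arcs N m then
        (if snd a \<in> leaves N m then - \<psi> (snd a, fst a)
         else - \<psi> (snd a, fst a)
              + (2 / of_nat (deg N m (snd a))) * (\<Sum>b\<in>{b \<in> arcs N m. fst b = snd a}. \<psi> b))
      else 0)"

definition psi0 :: "nat \<Rightarrow> nat \<Rightarrow> (nat \<times> nat \<Rightarrow> complex)" where
  "psi0 N m a = (if a \<in> arcs N m \<and> fst a < N \<and> snd a < N
                 then complex_of_real (1 / sqrt (real N * (real N - 1))) else 0)"

definition psi :: "nat \<Rightarrow> nat \<Rightarrow> nat \<Rightarrow> (nat \<times> nat \<Rightarrow> complex)" where
  "psi N m t = (Uop N m ^^ t) (psi0 N m)"

definition prob :: "nat \<Rightarrow> nat \<Rightarrow> nat \<Rightarrow> nat \<Rightarrow> real" where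
  "prob N m t v = (\<Sum>a\<in>{a \<in> arcs N m. snd a = v}. (cmod (psi N m t a))\<^sup>2)"

end

theory Submission
  imports Defs "HOL-Real_Asymp.Real_Asymp"
begin

text \<open>
  The walk never leaves the arc functions that are constant on five arc classes, so U acts
  through a real 5 x 5 matrix that is orthogonal for the norm inherited from the arcs. This matrix
  rotates a plane, spanned by vectors u and w, by an angle \<theta> with cos \<theta> = 1 - \<kappa> and
  0 < \<kappa> < 1/(N - 1). Up to an error of norm O(N^(-1/2)) the initial state is c u, and after
  \<lfloor>\<pi> / (2 \<theta>)\<rfloor> steps this component has turned into - c w, whose amplitude at v* has squared
  modulus c^2 |u|^2 / 2 = 1/2 + O(1/N). All error bounds are uniform in the number m \<ge> 1 of
  leaves.
\<close>

lemma adj_commute: "adj N m u v = adj N m v u"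
  unfolding adj_def by auto

lemma sum_arcs_from: "(\<Sum>b\<in>{b \<in> arcs N m. fst b = w}. f b) = (\<Sum>x | adj N m x w. f (w, x))"
proof -
  have "{b \<in> arcs N m. fst b = w} = Pair w ` {x. adj N m x w}"
    unfolding arcs_def by (auto simp: adj_commute)
  then show ?thesis by (simp add: sum.reindex inj_on_def)
qed

lemma sum_arcs_to: "(\<Sum>b\<in>{b \<in> arcs N m. snd b = w}. f b) = (\<Sum>x | adj N m x w. f (x, w))"
proof -
  have "{b \<in> arcs N m. snd b = w} = (\<lambda>x. (x, w)) ` {x. adj N m x w}"
    unfolding arcs_def by auto
  then show ?thesis by (simp add: sum.reindex inj_on_def)
qed

lemma deg_eq_card_adj: "deg N m w = card {x. adj N m x w}"
  using sum_arcs_to[where f = "\<lambda>_. 1::nat"] by (simp add: deg_def)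

lemma neighbours_vstar: "1 \<le> N \<Longrightarrow> {x. adj N m x 0} = {1..<N} \<union> {N..<N+m}"
  unfolding adj_def by auto

lemma neighbours_clique: "0 < w \<Longrightarrow> w < N \<Longrightarrow> {x. adj N m x w} = insert 0 ({1..<N} - {w})"
  unfolding adj_def by auto

lemma deg_vstar: "1 \<le> N \<Longrightarrow> deg N m 0 = N - 1 + m"
  by (simp add: deg_eq_card_adj neighbours_vstar card_Un_disjoint ivl_disj_int)

lemma deg_clique: "0 < w \<Longrightarrow> w < N \<Longrightarrow> deg N m w = N - 1"
  by (simp add: deg_eq_card_adj neighbours_clique)

section \<open>Reduction to five arc classes\<close>

type_synonym class_vector = "real \<times> real \<times> real \<times> real \<times> real"

text \<open>The value (A, B, C, D, E) is taken on the arcs from the clique into v*, from v* into the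
  clique, between two clique vertices other than v*, from v* to a leaf and from a leaf to v*.\<close>

definition class_function :: "nat \<Rightarrow> nat \<Rightarrow> class_vector \<Rightarrow> nat \<times> nat \<Rightarrow> real" where
  "class_function N m v a = (case v of (A, B, C, D, E) \<Rightarrow>
     if \<not> adj N m (fst a) (snd a) then 0
     else if snd a = 0 then (if fst a < N then A else E)
     else if fst a = 0 then (if snd a < N then B else D)
     else C)"

text \<open>M = N - 1 is the degree of a clique vertex other than v*, and M + m that of v*.\<close>

definition reduced_step :: "real \<Rightarrow> real \<Rightarrow> class_vector \<Rightarrow> class_vector" where
  "reduced_step M m v = (case v of (A, B, C, D, E) \<Rightarrow>
     (2 * (M * B + m * D) / (M + m) - B, 2 * (A + (M - 1) * C) / M - A,
      2 * (A + (M - 1) * C) / M - C, - E, 2 * (M * B + m * D) / (M + m) - D))"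

lemma sum_from_vstar:
  assumes "2 \<le> N"
  shows "(\<Sum>x | adj N m x 0. class_function N m (A, B, C, D, E) (0, x)) = (real N - 1) * B + real m * D"
proof -
  have "(\<Sum>x\<in>{1..<N}. class_function N m (A, B, C, D, E) (0, x)) = (\<Sum>x\<in>{1..<N}. B)"
    by (rule sum.cong) (auto simp: class_function_def adj_def)
  moreover have "(\<Sum>x\<in>{N..<N+m}. class_function N m (A, B, C, D, E) (0, x)) = (\<Sum>x\<in>{N..<N+m}. D)"
    by (rule sum.cong) (use assms in \<open>auto simp: class_function_def adj_def\<close>)
  ultimately show ?thesis
    using assms by (simp add: neighbours_vstar sum.union_disjoint ivl_disj_int of_nat_diff)
qed

lemma sum_from_clique:
  assumes "0 < w" "w < N"
  shows "(\<Sum>x | adj N m x w. class_function N m (A, B, C, D, E) (w, x)) = A + (real N - 2) * C"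
proof -
  have "(\<Sum>x\<in>{1..<N} - {w}. class_function N m (A, B, C, D, E) (w, x)) = (\<Sum>x\<in>{1..<N} - {w}. C)"
    by (rule sum.cong) (use assms in \<open>auto simp: class_function_def adj_def\<close>)
  moreover have "class_function N m (A, B, C, D, E) (w, 0) = A"
    using assms by (simp add: class_function_def adj_def)
  ultimately show ?thesis
    using assms by (simp add: neighbours_clique of_nat_diff)
qed

lemma sum_square_into_vstar:
  assumes "2 \<le> N"
  shows "(\<Sum>x | adj N m x 0. (class_function N m (A, B, C, D, E) (x, 0))\<^sup>2) = (real N - 1) * A\<^sup>2 + real m * E\<^sup>2"
proof -
  have "(\<Sum>x\<in>{1..<N}. (class_function N m (A, B, C, D, E) (x, 0))\<^sup>2) = (\<Sum>x\<in>{1..<N}. A\<^sup>2)"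
    by (rule sum.cong) (auto simp: class_function_def adj_def)
  moreover have "(\<Sum>x\<in>{N..<N+m}. (class_function N m (A, B, C, D, E) (x, 0))\<^sup>2) = (\<Sum>x\<in>{N..<N+m}. E\<^sup>2)"
    by (rule sum.cong) (use assms in \<open>auto simp: class_function_def adj_def\<close>)
  ultimately show ?thesis
    using assms by (simp add: neighbours_vstar sum.union_disjoint ivl_disj_int of_nat_diff)
qed

lemma Uop_of_real_apply_nonleaf:
  assumes "adj N m u w" "w \<notin> leaves N m"
  shows "Uop N m (\<lambda>a. of_real (f a)) (u, w)
       = of_real (- f (w, u) + 2 / real (deg N m w) * (\<Sum>x | adj N m x w. f (w, x)))"
proof -
  have "(u, w) \<in> arcs N m" using assms(1) by (simp add: arcs_def)
  then show ?thesis using assms(2) by (simp add: Uop_def sum_arcs_from)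
qed

lemma Uop_class_function:
  assumes N: "2 \<le> N"
  shows "Uop N m (\<lambda>a. of_real (class_function N m v a))
       = (\<lambda>a. of_real (class_function N m (reduced_step (real N - 1) (real m) v) a))"
proof
  fix a :: "nat \<times> nat"
  obtain A B C D E where v: "v = (A, B, C, D, E)" by (cases v)
  obtain u w where a: "a = (u, w)" by fastforce
  show "Uop N m (\<lambda>a. of_real (class_function N m v a)) a
      = of_real (class_function N m (reduced_step (real N - 1) (real m) v) a)"
  proof (cases "adj N m u w")
    case False
    then show ?thesis by (simp add: Uop_def arcs_def class_function_def a v)
  next
    case True
    note coin = Uop_of_real_apply_nonleaf[OF True]
    have "u \<noteq> w" using True by (simp add: adj_def)
    consider (leaf) "N \<le> w" | (vstar) "w = 0" | (clique) "0 < w" "w < N" by linarith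
    then show ?thesis
    proof cases
      case leaf
      then have "u = 0" "w \<in> leaves N m" using True N by (auto simp: adj_def leaves_def)
      then show ?thesis using True leaf N
        by (simp add: Uop_def arcs_def class_function_def reduced_step_def a v adj_commute)
    next
      case vstar
      have "w \<notin> leaves N m" using vstar N by (simp add: leaves_def)
      moreover have "(\<Sum>x | adj N m x w. class_function N m v (w, x)) = (real N - 1) * B + real m * D"
        using N by (simp add: vstar v sum_from_vstar)
      moreover have "real (deg N m w) = real N - 1 + real m"
        using N by (simp add: vstar deg_vstar)
      ultimately have "Uop N m (\<lambda>a. of_real (class_function N m v a)) a
          = of_real (- class_function N m v (w, u)
                     + 2 / (real N - 1 + real m) * ((real N - 1) * B + real m * D))"
        by (simp add: coin a)
      also have "\<dots> = of_real (class_function N m (reduced_step (real N - 1) (real m) v) a)"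
        using True vstar \<open>u \<noteq> w\<close> by (simp add: class_function_def reduced_step_def a v adj_commute)
      finally show ?thesis .
    next
      case clique
      have "w \<notin> leaves N m" using clique by (simp add: leaves_def)
      moreover have "(\<Sum>x | adj N m x w. class_function N m v (w, x)) = A + (real N - 2) * C"
        using clique by (simp add: v sum_from_clique)
      moreover have "real (deg N m w) = real N - 1"
        using clique by (simp add: deg_clique)
      ultimately have "Uop N m (\<lambda>a. of_real (class_function N m v a)) a
          = of_real (- class_function N m v (w, u) + 2 / (real N - 1) * (A + (real N - 2) * C))"
        by (simp add: coin a)
      also have "\<dots> = of_real (class_function N m (reduced_step (real N - 1) (real m) v) a)"
        using True clique by (auto simp: class_function_def reduced_step_def a v adj_commute)
      finally show ?thesis .
    qed
  qed
qed

definition uniform_amplitude :: "nat \<Rightarrow> real" where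
  "uniform_amplitude N = 1 / sqrt (real N * (real N - 1))"

definition reduced_state :: "nat \<Rightarrow> nat \<Rightarrow> nat \<Rightarrow> class_vector" where
  "reduced_state N m t = (reduced_step (real N - 1) (real m) ^^ t)
     (uniform_amplitude N, uniform_amplitude N, uniform_amplitude N, 0, 0)"

lemma psi_class_function:
  assumes "2 \<le> N"
  shows "psi N m t = (\<lambda>a. of_real (class_function N m (reduced_state N m t) a))"
proof (induction t)
  case 0
  show ?case
    using assms by (auto simp: psi_def reduced_state_def psi0_def uniform_amplitude_def
        class_function_def arcs_def adj_def)
next
  case (Suc t)
  then show ?case
    using Uop_class_function[OF assms] by (simp add: psi_def reduced_state_def)
qed

text \<open>Complex numbers serve only as a Euclidean plane: the point is that, unlike the
  probability, this amplitude is linear in the state.\<close>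

definition vstar_amplitude :: "real \<Rightarrow> real \<Rightarrow> class_vector \<Rightarrow> complex" where
  "vstar_amplitude M m v = (case v of (A, _, _, _, E) \<Rightarrow> Complex (sqrt M * A) (sqrt m * E))"

lemma prob_vstar_eq:
  assumes "2 \<le> N"
  shows "prob N m t vstar = (cmod (vstar_amplitude (real N - 1) (real m) (reduced_state N m t)))\<^sup>2"
proof -
  obtain A B C D E where v: "reduced_state N m t = (A, B, C, D, E)" by (cases "reduced_state N m t")
  have "prob N m t vstar = (real N - 1) * A\<^sup>2 + real m * E\<^sup>2"
    using assms by (simp add: prob_def vstar_def sum_arcs_to psi_class_function v sum_square_into_vstar)
  then show ?thesis
    using assms by (simp add: vstar_amplitude_def v cmod_def power_mult_distrib)
qed

section \<open>Orthogonality of the reduced walk\<close>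

lemma linear_reduced_step: "linear (reduced_step M m)"
  by (rule linearI) (auto simp: reduced_step_def add_divide_distrib diff_divide_distrib algebra_simps)

lemma linear_vstar_amplitude: "linear (vstar_amplitude M m)"
  by (rule linearI) (auto simp: vstar_amplitude_def complex_eq_iff algebra_simps)

text \<open>For M = N - 1 this is the squared norm of class_function N m v: the five classes contain
  M, M, M (M - 1), m and m arcs.\<close>

definition energy :: "real \<Rightarrow> real \<Rightarrow> class_vector \<Rightarrow> real" where
  "energy M m v = (case v of (A, B, C, D, E) \<Rightarrow>
     M * A\<^sup>2 + M * B\<^sup>2 + M * (M - 1) * C\<^sup>2 + m * D\<^sup>2 + m * E\<^sup>2)"

lemma energy_nonneg: "1 \<le> M \<Longrightarrow> 0 \<le> m \<Longrightarrow> 0 \<le> energy M m v"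
  by (cases v) (simp add: energy_def)

lemma energy_scaleR: "energy M m (c *\<^sub>R v) = c\<^sup>2 * energy M m v"
  by (cases v) (simp add: energy_def power_mult_distrib algebra_simps)

lemma energy_reduced_step:
  assumes "M \<noteq> 0" "M + m \<noteq> 0"
  shows "energy M m (reduced_step M m v) = energy M m v"
proof -
  obtain A B C D E where v: "v = (A, B, C, D, E)" by (cases v)
  define x y where "x = 2 * (M * B + m * D) / (M + m)" and "y = 2 * (A + (M - 1) * C) / M"
  have "x * (M + m) = 2 * (M * B + m * D)" "y * M = 2 * (A + (M - 1) * C)"
    using assms by (simp_all add: x_def y_def)
  then have "M * (x - B)\<^sup>2 + M * (y - A)\<^sup>2 + M * (M - 1) * (y - C)\<^sup>2 + m * (- E)\<^sup>2 + m * (x - D)\<^sup>2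
      = M * A\<^sup>2 + M * B\<^sup>2 + M * (M - 1) * C\<^sup>2 + m * D\<^sup>2 + m * E\<^sup>2"
    by algebra
  then show ?thesis by (simp add: energy_def reduced_step_def v x_def y_def)
qed

lemma energy_funpow_reduced_step:
  assumes "M \<noteq> 0" "M + m \<noteq> 0"
  shows "energy M m ((reduced_step M m ^^ t) v) = energy M m v"
  by (induction t) (simp_all add: energy_reduced_step assms)

lemma norm_vstar_amplitude_le:
  assumes "1 \<le> M" "0 \<le> m"
  shows "cmod (vstar_amplitude M m v) \<le> sqrt (energy M m v)"
proof -
  obtain A B C D E where v: "v = (A, B, C, D, E)" by (cases v)
  have "M * A\<^sup>2 + m * E\<^sup>2 \<le> energy M m v"
    using assms by (simp add: energy_def v)
  then show ?thesis
    using assms by (simp add: vstar_amplitude_def v cmod_def power_mult_distrib)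
qed

lemma linear_funpow:
  fixes f :: "'a::real_vector \<Rightarrow> 'a"
  shows "linear f \<Longrightarrow> linear (f ^^ n)"
  by (induction n) (simp_all add: linear_id linear_compose)

lemma linear_rotation_funpow:
  fixes f :: "'a::real_vector \<Rightarrow> 'a"
  assumes f: "linear f"
    and u: "f u = cos \<theta> *\<^sub>R u - sin \<theta> *\<^sub>R w"
    and w: "f w = sin \<theta> *\<^sub>R u + cos \<theta> *\<^sub>R w"
  shows "(f ^^ n) u = cos (n * \<theta>) *\<^sub>R u - sin (n * \<theta>) *\<^sub>R w"
proof (induction n)
  case 0
  show ?case by simp
next
  case (Suc n)
  have "(f ^^ Suc n) u = cos (n * \<theta>) *\<^sub>R f u - sin (n * \<theta>) *\<^sub>R f w"
    using Suc by (simp add: linear_diff[OF f] linear_cmul[OF f])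
  also have "\<dots> = cos (Suc n * \<theta>) *\<^sub>R u - sin (Suc n * \<theta>) *\<^sub>R w"
    by (simp add: u w distrib_right cos_add sin_add algebra_simps)
  finally show ?case .
qed

lemma quarter_period_floor_bounds:
  fixes \<theta> :: real
  assumes "0 < \<theta>" "\<theta> < pi / 2"
  defines "t \<equiv> nat \<lfloor>pi / (2 * \<theta>)\<rfloor>"
  shows "\<bar>cos (t * \<theta>)\<bar> \<le> sin \<theta>" and "\<bar>1 - sin (t * \<theta>)\<bar> \<le> 1 - cos \<theta>"
proof -
  have "real t = of_int \<lfloor>pi / (2 * \<theta>)\<rfloor>" using assms by (simp add: t_def)
  then have "real t \<le> pi / (2 * \<theta>)" "pi / (2 * \<theta>) < real t + 1" by linarith+
  then have "real t * \<theta> \<le> pi / 2" "pi / 2 < (real t + 1) * \<theta>"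
    using assms(1) by (simp_all add: field_simps)
  moreover define x where "x = pi / 2 - real t * \<theta>"
  ultimately have x: "x = pi / 2 - real t * \<theta>" "0 \<le> x" "x < \<theta>"
    by (simp_all add: algebra_simps)
  have "cos (t * \<theta>) = sin x" by (simp add: x(1) sin_cos_eq)
  moreover have "sin (t * \<theta>) = cos x" by (simp add: x(1) cos_sin_eq)
  moreover have "0 \<le> sin x"
    using x assms by (intro sin_ge_zero) auto
  moreover have "sin x \<le> sin \<theta>"
    using x assms by (intro sin_monotone_2pi_le) auto
  moreover have "cos \<theta> \<le> cos x"
    using x assms by (intro cos_monotone_0_pi_le) auto
  ultimately show "\<bar>cos (t * \<theta>)\<bar> \<le> sin \<theta>" "\<bar>1 - sin (t * \<theta>)\<bar> \<le> 1 - cos \<theta>"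
    by simp_all
qed

section \<open>The rotation plane\<close>

definition plane_re :: "real \<Rightarrow> real \<Rightarrow> class_vector" where
  "plane_re M k = (1 - M * k / 2, 1 - M * k / 2, 1, (1 - M * k) / 2, (1 - M * k) / 2)"

definition plane_im :: "real \<Rightarrow> real \<Rightarrow> real \<Rightarrow> class_vector" where
  "plane_im M s d = (M * s / 2, - (M * s / 2), 0, d, - d)"

lemma reduced_step_plane:
  fixes M m k s d :: real
  assumes "M \<noteq> 0" "M + m \<noteq> 0" "k \<noteq> 0" "(M + m) * (1 - k) * (1 - M * k) = M"
    and "s\<^sup>2 = k * (2 - k)" "2 * k * d = s * (1 - M * k)"
  shows "reduced_step M m (plane_re M k) = (1 - k) *\<^sub>R plane_re M k - s *\<^sub>R plane_im M s d"
    and "reduced_step M m (plane_im M s d) = s *\<^sub>R plane_re M k + (1 - k) *\<^sub>R plane_im M s d"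
  using assms
  by (simp_all add: reduced_step_def plane_re_def plane_im_def field_simps power2_eq_square; algebra)+

lemma vstar_amplitude_plane_im:
  fixes M m k s d :: real
  assumes M: "0 < M" and m: "0 \<le> m" and k: "k \<noteq> 0"
    and rel: "(M + m) * (1 - k) * (1 - M * k) = M"
    and s: "s\<^sup>2 = k * (2 - k)" and d: "2 * k * d = s * (1 - M * k)"
  shows "(cmod (vstar_amplitude M m (plane_im M s d)))\<^sup>2 = energy M m (plane_re M k) / 2"
proof -
  have "k\<^sup>2 * (M * (M * s / 2)\<^sup>2 + m * d\<^sup>2) = k\<^sup>2 * (energy M m (plane_re M k) / 2)"
    using rel s d by (simp add: energy_def plane_re_def field_simps power2_eq_square) algebra
  then show ?thesis
    using M m k by (simp add: vstar_amplitude_def plane_im_def cmod_def power_mult_distrib power_divide)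
qed

text \<open>(M + m) (1 - k) (1 - M k) = M is the condition under which reduced_step rotates the span
  of plane_re M k and plane_im (lemma reduced_step_plane); kappa M m is its smaller root.\<close>

definition kappa :: "real \<Rightarrow> real \<Rightarrow> real" where
  "kappa M m = ((1 + 1 / M) - sqrt ((1 - 1 / M)\<^sup>2 + 4 / (M + m))) / 2"

lemma kappa_root:
  fixes M m :: real
  assumes M: "0 < M" and m: "0 < m"
  shows "(M + m) * (1 - kappa M m) * (1 - M * kappa M m) = M"
    and "0 < kappa M m" and "kappa M m < 1 / M"
proof -
  define u v where "u = 1 / M" and "v = 1 / (M + m)"
  define S where "S = sqrt ((1 - u)\<^sup>2 + 4 * v)"
  have uv: "0 < v" "v < u" using M m by (simp_all add: u_def v_def frac_less2)
  have S2: "S\<^sup>2 = (1 - u)\<^sup>2 + 4 * v" and S0: "0 \<le> S" using uv by (simp_all add: S_def)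
  have k: "kappa M m = (1 + u - S) / 2" by (simp add: kappa_def u_def v_def S_def)
  have "(kappa M m)\<^sup>2 - (1 + u) * kappa M m + (u - v) = 0"
    unfolding k using S2 by (simp add: field_simps power2_eq_square)
  moreover have "M * u = 1" "(M + m) * v = 1" using M m by (simp_all add: u_def v_def)
  ultimately show "(M + m) * (1 - kappa M m) * (1 - M * kappa M m) = M"
    by algebra
  have "S\<^sup>2 < (1 + u)\<^sup>2" using S2 uv by (simp add: power2_eq_square algebra_simps)
  then have "S < 1 + u" by (rule power2_less_imp_less) (use uv in linarith)
  then show "0 < kappa M m" by (simp add: k)
  have "(1 - u)\<^sup>2 < S\<^sup>2" using S2 uv by simp
  then have "1 - u < S" using S0 by (rule power2_less_imp_less)
  then show "kappa M m < 1 / M" by (simp add: k u_def)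
qed

definition rotation_angle :: "real \<Rightarrow> real \<Rightarrow> real" where
  "rotation_angle M m = arccos (1 - kappa M m)"

lemma rotation_angle_facts:
  fixes M m :: real
  assumes "1 \<le> M" "0 < m"
  defines "\<theta> \<equiv> rotation_angle M m"
  shows "cos \<theta> = 1 - kappa M m" and "(sin \<theta>)\<^sup>2 = kappa M m * (2 - kappa M m)"
    and "0 < \<theta>" and "\<theta> < pi / 2"
proof -
  have "kappa M m < 1 / M" "1 / M \<le> 1" "0 < kappa M m"
    using kappa_root[of M m] assms by simp_all
  then have k: "0 < kappa M m" "kappa M m < 1" by linarith+
  then show cos: "cos \<theta> = 1 - kappa M m" by (simp add: \<theta>_def rotation_angle_def)
  have "(sin \<theta>)\<^sup>2 + (1 - kappa M m)\<^sup>2 = 1"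
    using sin_cos_squared_add[of \<theta>] by (simp add: cos)
  then show "(sin \<theta>)\<^sup>2 = kappa M m * (2 - kappa M m)" by algebra
  show "0 < \<theta>" using k arccos_lt_bounded[of "1 - kappa M m"] by (simp add: \<theta>_def rotation_angle_def)
  show "\<theta> < pi / 2" using k arccos_less_arccos[of 0 "1 - kappa M m"] by (simp add: \<theta>_def rotation_angle_def)
qed

lemma sin_rotation_angle_le:
  fixes M m :: real
  assumes "1 \<le> M" "0 < m"
  shows "sin (rotation_angle M m) \<le> sqrt (2 / M)"
proof -
  have k: "0 < kappa M m" "kappa M m < 1 / M" using kappa_root assms by simp_all
  have "(sin (rotation_angle M m))\<^sup>2 = 2 * kappa M m - (kappa M m)\<^sup>2"
    using rotation_angle_facts(2)[OF assms] by (simp add: power2_eq_square algebra_simps)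
  also have "\<dots> \<le> 2 * (1 / M)" using k zero_le_power2[of "kappa M m"] by linarith
  finally show ?thesis by (simp add: real_le_rsqrt)
qed

definition plane_im_at :: "real \<Rightarrow> real \<Rightarrow> class_vector" where
  "plane_im_at M m = (let k = kappa M m; s = sin (rotation_angle M m)
     in plane_im M s (s * (1 - M * k) / (2 * k)))"

lemma funpow_reduced_step_plane_re:
  fixes M m :: real
  assumes "1 \<le> M" "0 < m"
  shows "(reduced_step M m ^^ n) (plane_re M (kappa M m))
       = cos (n * rotation_angle M m) *\<^sub>R plane_re M (kappa M m)
         - sin (n * rotation_angle M m) *\<^sub>R plane_im_at M m"
proof (rule linear_rotation_funpow[OF linear_reduced_step])
  define k s where "k = kappa M m" and "s = sin (rotation_angle M m)"
  define d where "d = s * (1 - M * k) / (2 * k)"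
  have k: "0 < k" "(M + m) * (1 - k) * (1 - M * k) = M"
    using kappa_root assms by (simp_all add: k_def)
  have "2 * k * d = s * (1 - M * k)" using k by (simp add: d_def)
  moreover have "s\<^sup>2 = k * (2 - k)" using rotation_angle_facts(2) assms by (simp add: k_def s_def)
  moreover have "M \<noteq> 0" "M + m \<noteq> 0" using assms by simp_all
  ultimately have "reduced_step M m (plane_re M k) = (1 - k) *\<^sub>R plane_re M k - s *\<^sub>R plane_im M s d"
      "reduced_step M m (plane_im M s d) = s *\<^sub>R plane_re M k + (1 - k) *\<^sub>R plane_im M s d"
    using reduced_step_plane[of M m k s d] k by simp_all
  moreover have "plane_im_at M m = plane_im M s d" "cos (rotation_angle M m) = 1 - k"
    using rotation_angle_facts(1) assms by (simp_all add: plane_im_at_def Let_def k_def s_def d_def)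
  ultimately show "reduced_step M m (plane_re M (kappa M m))
      = cos (rotation_angle M m) *\<^sub>R plane_re M (kappa M m) - sin (rotation_angle M m) *\<^sub>R plane_im_at M m"
    "reduced_step M m (plane_im_at M m)
      = sin (rotation_angle M m) *\<^sub>R plane_re M (kappa M m) + cos (rotation_angle M m) *\<^sub>R plane_im_at M m"
    by (simp_all add: k_def s_def)
qed

lemma cmod_vstar_amplitude_plane_im_at:
  fixes M m :: real
  assumes "1 \<le> M" "0 < m"
  shows "cmod (vstar_amplitude M m (plane_im_at M m)) = sqrt (energy M m (plane_re M (kappa M m)) / 2)"
proof -
  define k s where "k = kappa M m" and "s = sin (rotation_angle M m)"
  have k: "0 < k" "(M + m) * (1 - k) * (1 - M * k) = M"
    using kappa_root assms by (simp_all add: k_def)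
  have "s\<^sup>2 = k * (2 - k)" using rotation_angle_facts(2) assms by (simp add: k_def s_def)
  then have "(cmod (vstar_amplitude M m (plane_im_at M m)))\<^sup>2 = energy M m (plane_re M k) / 2"
    using vstar_amplitude_plane_im[of M m k s "s * (1 - M * k) / (2 * k)"] k assms
    by (simp add: plane_im_at_def Let_def k_def s_def)
  then show ?thesis by (simp add: k_def real_sqrt_unique)
qed

section \<open>Estimates at the optimal time\<close>

lemma kappa_leaf_weight_le:
  fixes M m :: real
  assumes "2 \<le> M" "0 < m"
  shows "m * (1 - M * kappa M m)\<^sup>2 \<le> 2 * M"
proof -
  define k y where "k = kappa M m" and "y = 1 - M * k"
  have k: "0 < k" "k < 1 / M" "(M + m) * (1 - k) * y = M"
    using kappa_root assms by (simp_all add: k_def y_def)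
  have "0 < M * k" "M * k < 1" "1 / M \<le> 1 / 2" using k assms by (simp_all add: field_simps)
  then have y: "0 < y" "y \<le> 1" "1 / 2 \<le> 1 - k" using k by (simp_all add: y_def)
  have "m * y\<^sup>2 \<le> m * y" using y assms by (simp add: power2_eq_square mult_left_le)
  also have "\<dots> \<le> (M + m) * y" using y assms by simp
  also have "\<dots> \<le> (M + m) * y * (2 * (1 - k))"
    using y assms by (simp add: mult_le_cancel_left1 mult_less_0_iff)
  also have "\<dots> = 2 * ((M + m) * (1 - k) * y)" by (simp add: algebra_simps)
  finally have "m * y\<^sup>2 \<le> 2 * M" by (simp only: k(3))
  then show ?thesis by (simp add: y_def k_def)
qed

lemma energy_plane_re_bounds:
  fixes M m :: real
  assumes "2 \<le> M" "0 < m"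
  shows "M * (M - 1) \<le> energy M m (plane_re M (kappa M m))"
    and "energy M m (plane_re M (kappa M m)) \<le> M * (M + 2)"
proof -
  define k where "k = kappa M m"
  have "0 < M * k" "M * k < 1" using kappa_root[of M m] assms by (simp_all add: k_def field_simps)
  then have "(1 - M * k / 2)\<^sup>2 \<le> 1" by (intro power_le_one) auto
  then have "2 * M * (1 - M * k / 2)\<^sup>2 \<le> 2 * M" using assms by (intro mult_left_le) auto
  moreover have "m * (1 - M * k)\<^sup>2 \<le> 2 * M" using kappa_leaf_weight_le assms by (simp add: k_def)
  moreover have "0 \<le> 2 * M * (1 - M * k / 2)\<^sup>2" "0 \<le> m * (1 - M * k)\<^sup>2" using assms by simp_all
  moreover have "energy M m (plane_re M k)
      = 2 * M * (1 - M * k / 2)\<^sup>2 + M * (M - 1) + m * (1 - M * k)\<^sup>2 / 2"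
    by (simp add: energy_def plane_re_def power_divide algebra_simps)
  ultimately have "M * (M - 1) \<le> energy M m (plane_re M k)"
    and "energy M m (plane_re M k) \<le> M * (M - 1) + 3 * M"
    by linarith+
  then show "M * (M - 1) \<le> energy M m (plane_re M (kappa M m))"
    and "energy M m (plane_re M (kappa M m)) \<le> M * (M + 2)"
    by (simp_all add: k_def algebra_simps)
qed

definition initial_residual :: "real \<Rightarrow> real \<Rightarrow> class_vector" where
  "initial_residual M k = (M * k / 2, M * k / 2, 0, - ((1 - M * k) / 2), - ((1 - M * k) / 2))"

lemma plane_re_add_initial_residual: "plane_re M k + initial_residual M k = (1, 1, 1, 0, 0)"
  by (simp add: plane_re_def initial_residual_def)

lemma energy_initial_residual_le:
  fixes M m :: real
  assumes "2 \<le> M" "0 < m"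
  shows "energy M m (initial_residual M (kappa M m)) \<le> 3 * M / 2"
proof -
  define k where "k = kappa M m"
  have "0 < M * k" "M * k < 1" using kappa_root[of M m] assms by (simp_all add: k_def field_simps)
  then have "(M * k)\<^sup>2 \<le> 1" by (intro power_le_one) auto
  then have "M * (M * k)\<^sup>2 \<le> M" using assms by (intro mult_left_le) auto
  moreover have "m * (1 - M * k)\<^sup>2 \<le> 2 * M" using kappa_leaf_weight_le assms by (simp add: k_def)
  moreover have "energy M m (initial_residual M k) = M * (M * k)\<^sup>2 / 2 + m * (1 - M * k)\<^sup>2 / 2"
    by (simp add: energy_def initial_residual_def power_divide algebra_simps)
  ultimately show ?thesis by (simp add: k_def del: power_mult_distrib)
qed

lemma uniform_amplitude_sq:
  "1 \<le> N \<Longrightarrow> (uniform_amplitude N)\<^sup>2 = 1 / (real N * (real N - 1))"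
  by (simp add: uniform_amplitude_def power_divide)

lemma uniform_amplitude_mul_plane_re_norm:
  fixes m :: real
  assumes "3 \<le> N" "0 < m"
  defines "M \<equiv> real N - 1"
  shows "\<bar>uniform_amplitude N * sqrt (energy M m (plane_re M (kappa M m))) - 1\<bar> \<le> 2 / M"
proof -
  define E where "E = energy M m (plane_re M (kappa M m))"
  define q where "q = uniform_amplitude N * sqrt E"
  have M: "2 \<le> M" using assms by (simp add: M_def)
  have E: "M * (M - 1) \<le> E" "E \<le> M * (M + 2)"
    using energy_plane_re_bounds[OF M \<open>0 < m\<close>] by (simp_all add: E_def)
  have "0 \<le> E" using energy_nonneg M \<open>0 < m\<close> by (simp add: E_def)
  then have q0: "0 \<le> q" and "q\<^sup>2 = E / ((M + 1) * M)"
    using assms by (simp_all add: q_def uniform_amplitude_def power_mult_distrib power_divide M_def)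
  moreover have "(M + 1) * M \<noteq> 0" using M by simp
  ultimately have "q\<^sup>2 - 1 = (E - (M + 1) * M) / ((M + 1) * M)"
    by (simp add: diff_divide_distrib)
  then have "\<bar>q\<^sup>2 - 1\<bar> = \<bar>E - (M + 1) * M\<bar> / ((M + 1) * M)"
    using M by (simp add: abs_divide)
  also have "\<dots> \<le> 2 * M / ((M + 1) * M)"
    using E M by (intro divide_right_mono) (simp_all add: abs_le_iff algebra_simps)
  also have "\<dots> = 2 / (M + 1)" using M by simp
  also have "\<dots> \<le> 2 / M" using M by (simp add: frac_le)
  finally have "\<bar>q\<^sup>2 - 1\<bar> \<le> 2 / M" .
  moreover have "q\<^sup>2 - 1 = (q - 1) * (q + 1)" by (simp add: power2_eq_square algebra_simps)
  then have "\<bar>q\<^sup>2 - 1\<bar> = \<bar>q - 1\<bar> * (q + 1)" using q0 by (simp add: abs_mult)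
  moreover have "\<bar>q - 1\<bar> \<le> \<bar>q - 1\<bar> * (q + 1)" using q0 by (simp add: mult_le_cancel_left1)
  ultimately have "\<bar>q - 1\<bar> \<le> 2 / M" by linarith
  then show ?thesis by (simp add: q_def E_def)
qed

lemma energy_scaled_initial_residual_le:
  fixes m :: real
  assumes "3 \<le> N" "0 < m"
  defines "M \<equiv> real N - 1"
  shows "energy M m (uniform_amplitude N *\<^sub>R initial_residual M (kappa M m)) \<le> 2 / M"
proof -
  have M: "2 \<le> M" using assms by (simp add: M_def)
  have "energy M m (uniform_amplitude N *\<^sub>R initial_residual M (kappa M m))
      = energy M m (initial_residual M (kappa M m)) / ((M + 1) * M)"
    using assms by (simp add: energy_scaleR uniform_amplitude_sq M_def)
  also have "\<dots> \<le> (3 * M / 2) / ((M + 1) * M)"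
    using energy_initial_residual_le[OF M \<open>0 < m\<close>] M by (intro divide_right_mono) simp_all
  also have "\<dots> = (3 / 2) / (M + 1)" using M by simp
  also have "\<dots> \<le> 2 / M" using M by (simp add: field_simps)
  finally show ?thesis .
qed

lemma reduced_state_decomposition:
  fixes N m t :: nat
  assumes "2 \<le> N" "0 < m"
  defines "M \<equiv> real N - 1" and "c \<equiv> uniform_amplitude N" and "\<theta> \<equiv> rotation_angle (real N - 1) m"
  shows "reduced_state N m t
       = (c * cos (real t * \<theta>)) *\<^sub>R plane_re M (kappa M m)
         - (c * sin (real t * \<theta>)) *\<^sub>R plane_im_at M m
         + (reduced_step M m ^^ t) (c *\<^sub>R initial_residual M (kappa M m))"
proof -
  have M: "1 \<le> M" "0 < real m" using assms by (simp_all add: M_def)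
  note lin = linear_funpow[OF linear_reduced_step[of M "real m"], of t]
  have "(c, c, c, 0, 0) = c *\<^sub>R plane_re M (kappa M m) + c *\<^sub>R initial_residual M (kappa M m)"
    by (simp flip: scaleR_add_right add: plane_re_add_initial_residual)
  moreover have "reduced_state N m t = (reduced_step M m ^^ t) (c, c, c, 0, 0)"
    by (simp add: reduced_state_def M_def c_def)
  ultimately have "reduced_state N m t
      = c *\<^sub>R (reduced_step M m ^^ t) (plane_re M (kappa M m))
        + (reduced_step M m ^^ t) (c *\<^sub>R initial_residual M (kappa M m))"
    by (simp add: linear_add[OF lin] linear_cmul[OF lin])
  moreover have "\<theta> = rotation_angle M m" by (simp add: \<theta>_def M_def)
  ultimately show ?thesis
    by (simp add: funpow_reduced_step_plane_re[OF M] scaleR_diff_right)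
qed

definition optimal_time :: "nat \<Rightarrow> nat \<Rightarrow> nat" where
  "optimal_time N m = nat \<lfloor>pi / (2 * rotation_angle (real N - 1) (real m))\<rfloor>"

text \<open>After a quarter turn C = cos (t \<theta>) and 1 - S = 1 - sin (t \<theta>) are small, so the vector
  is close to - c w, whose norm is c \<rho> / sqrt 2.\<close>

lemma norm_rotated_estimate:
  fixes u w r :: "'a::real_normed_vector"
  assumes "0 \<le> c" "norm u \<le> \<rho>" "norm w = \<rho> / sqrt 2"
    and "\<bar>C\<bar> \<le> \<epsilon>" "\<bar>1 - S\<bar> \<le> \<delta>" "norm r \<le> \<eta>"
  shows "\<bar>norm ((c * C) *\<^sub>R u - (c * S) *\<^sub>R w + r) - 1 / sqrt 2\<bar>
       \<le> c * \<rho> * (\<epsilon> + \<delta>) + \<eta> + \<bar>c * \<rho> - 1\<bar>"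
proof -
  define x where "x = (c * C) *\<^sub>R u - (c * S) *\<^sub>R w + r"
  have "x + c *\<^sub>R w = (c * C) *\<^sub>R u + (c * (1 - S)) *\<^sub>R w + r"
    by (simp add: x_def algebra_simps)
  then have "norm (x + c *\<^sub>R w) \<le> norm ((c * C) *\<^sub>R u) + norm ((c * (1 - S)) *\<^sub>R w) + norm r"
    by (metis norm_triangle_ineq add_right_mono order_trans)
  also have "\<dots> = c * \<bar>C\<bar> * norm u + c * \<bar>1 - S\<bar> * norm w + norm r"
    using assms(1) by (simp add: abs_mult)
  also have "\<dots> \<le> c * \<epsilon> * \<rho> + c * \<delta> * \<rho> + \<eta>"
  proof -
    have "0 \<le> \<rho>" using assms(2) norm_ge_zero[of u] by linarith
    moreover from this have "\<rho> / sqrt 2 \<le> \<rho>" by (simp add: divide_le_eq mult_le_cancel_left1)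
    ultimately show ?thesis using assms by (intro add_mono mult_mono mult_left_mono) auto
  qed
  finally have "norm (x + c *\<^sub>R w) \<le> c * \<rho> * (\<epsilon> + \<delta>) + \<eta>" by (simp add: algebra_simps)
  moreover have "\<bar>norm x - norm (c *\<^sub>R w)\<bar> \<le> norm (x + c *\<^sub>R w)"
    using norm_triangle_ineq3[of x "- (c *\<^sub>R w)"] by simp
  moreover have "norm (c *\<^sub>R w) = c * \<rho> / sqrt 2" using assms(1,3) by simp
  moreover have "\<bar>c * \<rho> / sqrt 2 - 1 / sqrt 2\<bar> \<le> \<bar>c * \<rho> - 1\<bar>"
    by (simp add: diff_divide_distrib[symmetric] abs_divide divide_le_eq mult_le_cancel_left1)
  ultimately have "\<bar>norm x - 1 / sqrt 2\<bar> \<le> c * \<rho> * (\<epsilon> + \<delta>) + \<eta> + \<bar>c * \<rho> - 1\<bar>"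
    unfolding abs_le_iff by linarith
  then show ?thesis by (simp add: x_def)
qed

lemma vstar_amplitude_at_optimal_time:
  fixes N m :: nat
  assumes "3 \<le> N" "1 \<le> m"
  defines "M \<equiv> real N - 1"
  shows "\<bar>cmod (vstar_amplitude M m (reduced_state N m (optimal_time N m))) - 1 / sqrt 2\<bar>
       \<le> 3 * sqrt (2 / M) + 4 / M"
proof -
  have M: "2 \<le> M" "1 \<le> M" and m: "0 < real m" using assms by (simp_all add: M_def)
  define k \<theta> t c where "k = kappa M m" and "\<theta> = rotation_angle M m"
    and "t = optimal_time N m" and "c = uniform_amplitude N"
  define a n where "a = vstar_amplitude M m" and "n = energy M m (plane_re M k)"
  define r where "r = (reduced_step M m ^^ t) (c *\<^sub>R initial_residual M k)"
  have c: "0 < c" using assms by (simp add: c_def uniform_amplitude_def)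
  have q: "\<bar>c * sqrt n - 1\<bar> \<le> 2 / M"
    using uniform_amplitude_mul_plane_re_norm[of N m] assms by (simp add: c_def n_def k_def M_def)
  moreover have "2 / M \<le> 1" using M by simp
  ultimately have q2: "c * sqrt n \<le> 2" by linarith
  have k: "0 < k" "k \<le> 1 / M" using kappa_root[of M m] M m by (simp_all add: k_def)
  note angle = rotation_angle_facts[OF M(2) m, folded \<theta>_def k_def]
  have "sin \<theta> \<le> sqrt (2 / M)" using sin_rotation_angle_le[OF M(2) m] by (simp add: \<theta>_def)
  then have trig: "\<bar>cos (t * \<theta>)\<bar> \<le> sqrt (2 / M)" "\<bar>1 - sin (t * \<theta>)\<bar> \<le> 1 / M"
    using quarter_period_floor_bounds[of \<theta>] angle k
    by (simp_all add: t_def optimal_time_def \<theta>_def M_def)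
  define uR uI where "uR = a (plane_re M k)" and "uI = a (plane_im_at M m)"
  have "cmod uR \<le> sqrt n"
    using norm_vstar_amplitude_le M m by (simp add: uR_def a_def n_def)
  moreover have "cmod uI = sqrt n / sqrt 2"
    using cmod_vstar_amplitude_plane_im_at[OF M(2) m] by (simp add: uI_def a_def n_def k_def real_sqrt_divide)
  moreover have "cmod (a r) \<le> sqrt (2 / M)"
  proof -
    have "cmod (a r) \<le> sqrt (energy M m (c *\<^sub>R initial_residual M k))"
      using norm_vstar_amplitude_le[of M m r] M m by (simp add: a_def r_def energy_funpow_reduced_step)
    also have "\<dots> \<le> sqrt (2 / M)"
      using energy_scaled_initial_residual_le[of N m] assms by (simp add: c_def k_def M_def)
    finally show ?thesis .
  qed
  ultimately have "\<bar>cmod ((c * cos (t * \<theta>)) *\<^sub>R uR - (c * sin (t * \<theta>)) *\<^sub>R uI + a r) - 1 / sqrt 2\<bar>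
      \<le> c * sqrt n * (sqrt (2 / M) + 1 / M) + sqrt (2 / M) + \<bar>c * sqrt n - 1\<bar>"
    using c trig by (intro norm_rotated_estimate) simp_all
  also have "\<dots> \<le> 2 * (sqrt (2 / M) + 1 / M) + sqrt (2 / M) + 2 / M"
    using q q2 M by (intro add_mono mult_right_mono) simp_all
  moreover have "(c * cos (t * \<theta>)) *\<^sub>R uR - (c * sin (t * \<theta>)) *\<^sub>R uI + a r = a (reduced_state N m t)"
    using reduced_state_decomposition[of N m t] assms
    by (simp add: uR_def uI_def a_def r_def c_def k_def \<theta>_def M_def linear_add[OF linear_vstar_amplitude]
        linear_diff[OF linear_vstar_amplitude] linear_cmul[OF linear_vstar_amplitude])
  ultimately show ?thesis by (simp add: a_def t_def algebra_simps)
qed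

lemma one_le_nat_floor_powr:
  assumes "1 \<le> N" "0 \<le> \<alpha>"
  shows "1 \<le> nat \<lfloor>real N powr \<alpha>\<rfloor>"
proof -
  have "1 \<le> real N powr \<alpha>" using assms by (intro ge_one_powr_ge_zero) auto
  then show ?thesis by linarith
qed

theorem theorem1:
  fixes \<alpha> :: real
  assumes "\<alpha> \<ge> 0"
  shows "\<exists>t_opt :: nat \<Rightarrow> nat.
           (\<lambda>N. prob N (nat \<lfloor>real N powr \<alpha>\<rfloor>) (t_opt N) vstar) \<longlonglongrightarrow> 1 / 2"
proof
  define m where "m N = nat \<lfloor>real N powr \<alpha>\<rfloor>" for N :: nat
  define amp where
    "amp N = cmod (vstar_amplitude (real N - 1) (m N) (reduced_state N (m N) (optimal_time N (m N))))"
    for N :: nat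
  have "\<forall>\<^sub>F N in sequentially.
      norm (amp N - 1 / sqrt 2) \<le> 3 * sqrt (2 / (real N - 1)) + 4 / (real N - 1)"
    using eventually_ge_at_top[of 3]
  proof eventually_elim
    case (elim N)
    moreover have "1 \<le> m N" using one_le_nat_floor_powr[of N \<alpha>] elim assms by (simp add: m_def)
    ultimately show ?case using vstar_amplitude_at_optimal_time[of N "m N"] by (simp add: amp_def)
  qed
  moreover have "(\<lambda>N. 3 * sqrt (2 / (real N - 1)) + 4 / (real N - 1)) \<longlonglongrightarrow> 0" by real_asymp
  ultimately have "(\<lambda>N. amp N - 1 / sqrt 2) \<longlonglongrightarrow> 0"
    by (rule Lim_null_comparison)
  then have "(\<lambda>N. (amp N)\<^sup>2) \<longlonglongrightarrow> (1 / sqrt 2)\<^sup>2"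
    by (intro tendsto_power) (simp add: LIM_zero_iff)
  moreover have "\<forall>\<^sub>F N in sequentially. (amp N)\<^sup>2 = prob N (m N) (optimal_time N (m N)) vstar"
    using eventually_ge_at_top[of 2] by eventually_elim (simp add: amp_def prob_vstar_eq)
  ultimately show "(\<lambda>N. prob N (nat \<lfloor>real N powr \<alpha>\<rfloor>) (optimal_time N (m N)) vstar) \<longlonglongrightarrow> 1 / 2"
    by (auto simp: m_def power_divide elim: Lim_transform_eventually)
qed

end
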